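(* Let $\mathbb X,\mathbb Y$ be Euclidean spaces, $\varphi\colon\mathbb X\to\mathbb R$ locally Lipschitz, $\Phi\colon\mathbb X\rightrightarrows\mathbb Y$ with closed graph, $\bar y\in\operatorname{Im}\Phi$, and consider (P): $\min\{\varphi(x)\mid\bar y\in\Phi(x)\}$. Let $\bar x$ be feasible for (P), $\gamma_0\geq1$, $\gamma\geq1$, and $u\in\mathbb S_{\mathbb X}$. Then $u$ is critical of order $(\gamma_0,\gamma)$ for (P) at $\bar x$ if and only if there exist sequences $u_k\to u$ and $t_k\downarrow 0$ such that $$\frac{\operatorname{dist}(\varphi(\bar x),M_0(\bar x+t_ku_k))}{(t_k\|u_k\|)^{\gamma_0}}\to0,\qquad \frac{\operatorname{dist}(\bar y,\Phi(\bar x+t_ku_k))}{(t_k\|u_k\|)^{\gamma}}\to0,$$ where $M_0(x):=\varphi(x)+\mathbb R_+$. Moreover, if $\gamma_0=\gamma$, this is further equivalent to $u\in\ker D_\gamma M(\bar x,(\varphi(\bar x),\bar y))$ for the mapping $M\colon\mathbb X\rightrightarrows\mathbb R\times\mathbb Y$, $M(x):=M_0(x)\times\Phi(x)$.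
   Context: $u\in\mathbb X$ is critical of order $(\gamma_0,\gamma)$ for (P) at $\bar x$ if there are $u_k\to u$, $\alpha_k\to0$ in $\mathbb R$, $v_k\to0$ in $\mathbb Y$, $t_k\downarrow0$ with $(\bar x+t_ku_k,\varphi(\bar x)+(t_k\|u_k\|)^{\gamma_0}\alpha_k)\in\operatorname{epi}\varphi$ and $(\bar x+t_ku_k,\bar y+(t_k\|u_k\|)^\gamma v_k)\in\operatorname{gph}\Phi$ for all $k$. For a mapping $M$ with closed graph and $(\bar x,\bar z)\in\operatorname{gph}M$, the graphical pseudo-derivative of order $\gamma$, $D_\gamma M(\bar x,\bar z)$, assigns to $u$ all $w$ such that there are $u_k\to u$, $w_k\to w$, $t_k\downarrow0$ with $(\bar x+t_ku_k,\bar z+(t_k\|u_k\|)^\gamma w_k)\in\operatorname{gph}M$; $\ker D_\gamma M(\bar x,\bar z)=\{u\mid 0\in D_\gamma M(\bar x,\bar z)(u)\}$. $\mathbb S_{\mathbb X}$ is the unit sphere. *)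

theory Defs
  imports "HOL-Analysis.Analysis"
begin

definition loc_lipschitz :: "('a::metric_space \<Rightarrow> real) \<Rightarrow> bool" where
  "loc_lipschitz f \<longleftrightarrow> (\<forall>x. \<exists>e>0. \<exists>L. L-lipschitz_on (ball x e) f)"

definition gph :: "('a \<Rightarrow> 'b set) \<Rightarrow> ('a \<times> 'b) set" where
  "gph F = {(x, y). y \<in> F x}"

definition epi :: "('a \<Rightarrow> real) \<Rightarrow> ('a \<times> real) set" where
  "epi f = {(x, r). f x \<le> r}"

definition M0 :: "('a \<Rightarrow> real) \<Rightarrow> 'a \<Rightarrow> real set" where
  "M0 f x = {f x + r | r. r \<ge> 0}"

definition Mmap :: "('a \<Rightarrow> real) \<Rightarrow> ('a \<Rightarrow> 'b set) \<Rightarrow> 'a \<Rightarrow> (real \<times> 'b) set" where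
  "Mmap f F x = M0 f x \<times> F x"

definition critical ::
  "('a::real_normed_vector \<Rightarrow> real) \<Rightarrow> ('a \<Rightarrow> 'b::real_normed_vector set) \<Rightarrow> 'a \<Rightarrow> 'b
     \<Rightarrow> real \<Rightarrow> real \<Rightarrow> 'a \<Rightarrow> bool" where
  "critical f F xb yb g0 g u \<longleftrightarrow>
     (\<exists>uk ak vk t. uk \<longlonglongrightarrow> u \<and> ak \<longlonglongrightarrow> 0 \<and> vk \<longlonglongrightarrow> 0 \<and>
        (\<forall>k. t k > 0) \<and> t \<longlonglongrightarrow> 0 \<and>
        (\<forall>k. (xb + t k *\<^sub>R uk k, f xb + (t k * norm (uk k)) powr g0 * ak k) \<in> epi f) \<and>
        (\<forall>k. (xb + t k *\<^sub>R uk k, yb + (t k * norm (uk k)) powr g *\<^sub>R vk k) \<in> gph F))"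

definition pseudo_deriv ::
  "real \<Rightarrow> ('a::real_normed_vector \<Rightarrow> 'c::real_normed_vector set) \<Rightarrow> 'a \<Rightarrow> 'c \<Rightarrow> 'a \<Rightarrow> 'c set" where
  "pseudo_deriv g M xb zb u =
     {w. \<exists>uk wk t. uk \<longlonglongrightarrow> u \<and> wk \<longlonglongrightarrow> w \<and> (\<forall>k. t k > 0) \<and> t \<longlonglongrightarrow> 0 \<and>
        (\<forall>k. (xb + t k *\<^sub>R uk k, zb + (t k * norm (uk k)) powr g *\<^sub>R wk k) \<in> gph M)}"

definition pseudo_deriv_ker ::
  "real \<Rightarrow> ('a::real_normed_vector \<Rightarrow> 'c::real_normed_vector set) \<Rightarrow> 'a \<Rightarrow> 'c \<Rightarrow> 'a set" where
  "pseudo_deriv_ker g M xb zb = {u. 0 \<in> pseudo_deriv g M xb zb u}"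

end

(*
  Both inclusions defining criticality say that a base point plus a scaled offset,
  z + s_k v_k with s_k = (t_k |u_k|)^gamma, lies in a closed set S_k: the set F(x_k) for the
  constraint, and M0(x_k) for the epigraph of phi.  Offsets v_k tending to 0 exist iff
  dist(z, S_k) / s_k tends to 0: one direction is dist(z, S_k) <= s_k |v_k|, the other takes
  v_k towards a nearest point of S_k, which exists because S_k is closed in a finite-dimensional
  space and s_k > 0 eventually since u is nonzero.  For gamma0 = gamma the two offsets form a
  single offset of (phi(xb), yb) into M(x_k) = M0(x_k) x F(x_k), which is the kernel condition.
*)
theory Submission
  imports Defs
begin

lemma M0_eq_atLeast: "M0 f x = {f x..}"
  unfolding M0_def by (auto intro: exI[of _ "_ - f x"])

lemma epi_iff_M0: "(x, r) \<in> epi f \<longleftrightarrow> r \<in> M0 f x"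
  by (simp add: epi_def M0_eq_atLeast)

lemma gph_Mmap_iff: "(x, (r, y)) \<in> gph (Mmap f F) \<longleftrightarrow> (x, r) \<in> epi f \<and> (x, y) \<in> gph F"
  by (simp add: gph_def Mmap_def epi_iff_M0)

lemma closed_fiber_if_closed_gph:
  fixes F :: "'a::topological_space \<Rightarrow> 'b::topological_space set"
  assumes "closed (gph F)"
  shows "closed (F x)"
proof -
  have "F x = Pair x -` gph F"
    by (auto simp: gph_def)
  then show ?thesis
    by (simp add: assms closed_vimage continuous_on_Pair)
qed

lemma infdist_div_le_norm:
  fixes v :: "'a::real_normed_vector"
  assumes "y + c *\<^sub>R v \<in> S" and "c \<ge> 0"
  shows "infdist y S / c \<le> norm v"
proof (cases "c = 0")
  case False
  have "infdist y S \<le> dist y (y + c *\<^sub>R v)"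
    using assms(1) by (rule infdist_le)
  also have "\<dots> = c * norm v"
    using assms(2) by (simp add: dist_norm)
  finally show ?thesis
    using False assms(2) by (simp add: divide_le_eq mult.commute)
qed simp

lemma tendsto_infdist_div_zero:
  fixes v :: "'i \<Rightarrow> 'a::real_normed_vector"
  assumes "(v \<longlongrightarrow> 0) F"
    and "\<forall>\<^sub>F k in F. c k \<ge> 0 \<and> y + c k *\<^sub>R v k \<in> S k"
  shows "((\<lambda>k. infdist y (S k) / c k) \<longlongrightarrow> 0) F"
proof (rule Lim_null_comparison)
  show "\<forall>\<^sub>F k in F. norm (infdist y (S k) / c k) \<le> norm (v k)"
    using assms(2)
    by eventually_elim (simp add: infdist_div_le_norm infdist_nonneg)
  show "((\<lambda>k. norm (v k)) \<longlongrightarrow> 0) F"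
    using assms(1) by (rule tendsto_norm_zero)
qed

lemma offsets_if_tendsto_infdist_div_zero:
  fixes S :: "'i \<Rightarrow> 'a::{real_normed_vector, heine_borel} set"
  assumes "((\<lambda>k. infdist y (S k) / c k) \<longlongrightarrow> 0) F"
    and "\<forall>\<^sub>F k in F. c k > 0 \<and> closed (S k) \<and> S k \<noteq> {}"
  obtains v where "(v \<longlongrightarrow> 0) F" and "\<forall>\<^sub>F k in F. y + c k *\<^sub>R v k \<in> S k"
proof -
  have "\<exists>z. closed (S k) \<and> S k \<noteq> {} \<longrightarrow> z \<in> S k \<and> infdist y (S k) = dist y z" for k
    by (metis infdist_attains_inf)
  then obtain z where z: "\<And>k. closed (S k) \<Longrightarrow> S k \<noteq> {} \<Longrightarrow>
      z k \<in> S k \<and> infdist y (S k) = dist y (z k)"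
    by metis
  define v where "v k = (z k - y) /\<^sub>R c k" for k
  have offset: "\<forall>\<^sub>F k in F. y + c k *\<^sub>R v k \<in> S k \<and> infdist y (S k) / c k = norm (v k)"
    using assms(2)
    by eventually_elim (simp add: v_def z dist_norm norm_minus_commute divide_inverse_commute)
  have "((\<lambda>k. norm (v k)) \<longlongrightarrow> 0) F"
    using Lim_transform_eventually[OF assms(1)] offset by (simp add: eventually_conj_iff)
  with offset show thesis
    by (auto intro: that tendsto_norm_zero_cancel elim: eventually_mono)
qed

lemma critical_if_eventually:
  assumes "uk \<longlonglongrightarrow> u" and "ak \<longlonglongrightarrow> 0" and "vk \<longlonglongrightarrow> 0"
    and "\<forall>k. t k > 0" and "t \<longlonglongrightarrow> 0"
    and "\<forall>\<^sub>F k in sequentially.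
          (xb + t k *\<^sub>R uk k, f xb + (t k * norm (uk k)) powr g0 * ak k) \<in> epi f \<and>
          (xb + t k *\<^sub>R uk k, yb + (t k * norm (uk k)) powr g *\<^sub>R vk k) \<in> gph F"
  shows "critical f F xb yb g0 g u"
proof -
  obtain N where N: "\<And>k. k \<ge> N \<Longrightarrow>
      (xb + t k *\<^sub>R uk k, f xb + (t k * norm (uk k)) powr g0 * ak k) \<in> epi f \<and>
      (xb + t k *\<^sub>R uk k, yb + (t k * norm (uk k)) powr g *\<^sub>R vk k) \<in> gph F"
    using assms(6) unfolding eventually_sequentially by blast
  show ?thesis
    unfolding critical_def using assms(1-5) N
    by (intro exI[of _ "\<lambda>k. uk (k + N)"] exI[of _ "\<lambda>k. ak (k + N)"]
        exI[of _ "\<lambda>k. vk (k + N)"] exI[of _ "\<lambda>k. t (k + N)"])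
      (simp add: LIMSEQ_ignore_initial_segment)
qed

lemma critical_imp_infdist_quotients_tendsto_zero:
  fixes f :: "'a::real_normed_vector \<Rightarrow> real" and F :: "'a \<Rightarrow> 'b::real_normed_vector set"
  assumes "critical f F xb yb g0 g u"
  shows "\<exists>uk t. uk \<longlonglongrightarrow> u \<and> (\<forall>k. t k > 0) \<and> t \<longlonglongrightarrow> 0 \<and>
           (\<lambda>k. infdist (f xb) (M0 f (xb + t k *\<^sub>R uk k)) / (t k * norm (uk k)) powr g0)
             \<longlonglongrightarrow> 0 \<and>
           (\<forall>\<^sub>F k in sequentially. F (xb + t k *\<^sub>R uk k) \<noteq> {}) \<and>
           (\<lambda>k. infdist yb (F (xb + t k *\<^sub>R uk k)) / (t k * norm (uk k)) powr g)
             \<longlonglongrightarrow> 0"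
proof -
  obtain uk ak vk t where uk: "uk \<longlonglongrightarrow> u" and ak: "ak \<longlonglongrightarrow> 0" and vk: "vk \<longlonglongrightarrow> 0"
    and t: "\<forall>k. t k > 0" "t \<longlonglongrightarrow> 0"
    and epi: "\<forall>k. (xb + t k *\<^sub>R uk k, f xb + (t k * norm (uk k)) powr g0 * ak k) \<in> epi f"
    and gph: "\<forall>k. (xb + t k *\<^sub>R uk k, yb + (t k * norm (uk k)) powr g *\<^sub>R vk k) \<in> gph F"
    using assms unfolding critical_def by blast
  have "(\<lambda>k. infdist (f xb) (M0 f (xb + t k *\<^sub>R uk k)) / (t k * norm (uk k)) powr g0)
      \<longlonglongrightarrow> 0"
    using ak by (rule tendsto_infdist_div_zero) (use epi in \<open>simp add: epi_iff_M0\<close>)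
  moreover have "(\<lambda>k. infdist yb (F (xb + t k *\<^sub>R uk k)) / (t k * norm (uk k)) powr g)
      \<longlonglongrightarrow> 0"
    using vk by (rule tendsto_infdist_div_zero) (use gph in \<open>simp add: gph_def\<close>)
  moreover have "\<forall>k. F (xb + t k *\<^sub>R uk k) \<noteq> {}"
    using gph by (auto simp: gph_def)
  ultimately show ?thesis
    using uk t by (auto intro!: exI[of _ uk] exI[of _ t])
qed

text \<open>Without \<open>u \<noteq> 0\<close> the scales \<open>t k * norm (uk k)\<close> could vanish, and the quotients would
  then be \<open>0\<close> only by the convention \<open>x / 0 = 0\<close>.\<close>
lemma critical_if_infdist_quotients_tendsto_zero:
  fixes f :: "'a::real_normed_vector \<Rightarrow> real"
    and F :: "'a \<Rightarrow> 'b::{real_normed_vector, heine_borel} set"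
  assumes "closed (gph F)" and "u \<noteq> 0"
    and "\<exists>uk t. uk \<longlonglongrightarrow> u \<and> (\<forall>k. t k > 0) \<and> t \<longlonglongrightarrow> 0 \<and>
           (\<lambda>k. infdist (f xb) (M0 f (xb + t k *\<^sub>R uk k)) / (t k * norm (uk k)) powr g0)
             \<longlonglongrightarrow> 0 \<and>
           (\<forall>\<^sub>F k in sequentially. F (xb + t k *\<^sub>R uk k) \<noteq> {}) \<and>
           (\<lambda>k. infdist yb (F (xb + t k *\<^sub>R uk k)) / (t k * norm (uk k)) powr g)
             \<longlonglongrightarrow> 0"
  shows "critical f F xb yb g0 g u"
proof -
  obtain uk t where uk: "uk \<longlonglongrightarrow> u" and t: "\<forall>k. t k > 0" "t \<longlonglongrightarrow> 0"
    and quot0: "(\<lambda>k. infdist (f xb) (M0 f (xb + t k *\<^sub>R uk k)) / (t k * norm (uk k)) powr g0)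
      \<longlonglongrightarrow> 0"
    and nonempty: "\<forall>\<^sub>F k in sequentially. F (xb + t k *\<^sub>R uk k) \<noteq> {}"
    and quot: "(\<lambda>k. infdist yb (F (xb + t k *\<^sub>R uk k)) / (t k * norm (uk k)) powr g) \<longlonglongrightarrow> 0"
    using assms(3) by blast
  have scale_pos: "\<forall>\<^sub>F k in sequentially. t k * norm (uk k) > 0"
    using tendsto_imp_eventually_ne[OF uk assms(2)] t(1) by (auto elim: eventually_mono)
  obtain ak where ak: "ak \<longlonglongrightarrow> 0" and epi: "\<forall>\<^sub>F k in sequentially.
      f xb + (t k * norm (uk k)) powr g0 *\<^sub>R ak k \<in> M0 f (xb + t k *\<^sub>R uk k)"
    using quot0 by (rule offsets_if_tendsto_infdist_div_zero)
      (use scale_pos in \<open>auto simp: M0_eq_atLeast elim: eventually_mono\<close>)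
  obtain vk where vk: "vk \<longlonglongrightarrow> 0" and gph: "\<forall>\<^sub>F k in sequentially.
      yb + (t k * norm (uk k)) powr g *\<^sub>R vk k \<in> F (xb + t k *\<^sub>R uk k)"
    using quot by (rule offsets_if_tendsto_infdist_div_zero)
      (use scale_pos nonempty closed_fiber_if_closed_gph[OF assms(1)] in
        \<open>auto elim: eventually_mono simp: eventually_conj_iff\<close>)
  show ?thesis
    using uk ak vk t epi gph
    by (intro critical_if_eventually) (auto simp: epi_iff_M0 gph_def eventually_conj_iff)
qed

lemma critical_iff_pseudo_deriv_ker:
  fixes f :: "'a::real_normed_vector \<Rightarrow> real" and F :: "'a \<Rightarrow> 'b::real_normed_vector set"
  shows "critical f F xb yb g g u \<longleftrightarrow> u \<in> pseudo_deriv_ker g (Mmap f F) xb (f xb, yb)"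
proof -
  have gph_M: "(x, (f xb, yb) + c *\<^sub>R w) \<in> gph (Mmap f F) \<longleftrightarrow>
      (x, f xb + c * fst w) \<in> epi f \<and> (x, yb + c *\<^sub>R snd w) \<in> gph F"
    for x c and w :: "real \<times> 'b"
    by (cases w) (simp add: gph_Mmap_iff)
  have tendsto_0_iff: "w \<longlonglongrightarrow> 0 \<longleftrightarrow> (\<lambda>k. fst (w k)) \<longlonglongrightarrow> 0 \<and> (\<lambda>k. snd (w k)) \<longlonglongrightarrow> 0"
    for w :: "nat \<Rightarrow> real \<times> 'b"
    using tendsto_Pair[of "\<lambda>k. fst (w k)" 0 _ "\<lambda>k. snd (w k)" 0] tendsto_fst tendsto_snd
    by (fastforce simp: zero_prod_def)
  show ?thesis
    unfolding critical_def pseudo_deriv_ker_def pseudo_deriv_def mem_Collect_eq gph_M tendsto_0_iff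
    apply (rule iffI; elim exE conjE)
    subgoal for uk ak vk t
      by (intro exI[of _ uk] exI[of _ "\<lambda>k. (ak k, vk k)"] exI[of _ t]) simp
    subgoal for uk w t
      by (intro exI[of _ uk] exI[of _ "\<lambda>k. fst (w k)"] exI[of _ "\<lambda>k. snd (w k)"] exI[of _ t])
        simp
    done
qed

lemma critical_iff_infdist_quotients_tendsto_zero:
  fixes f :: "'a::real_normed_vector \<Rightarrow> real"
    and F :: "'a \<Rightarrow> 'b::{real_normed_vector, heine_borel} set"
  assumes "closed (gph F)" and "u \<noteq> 0"
  shows "critical f F xb yb g0 g u \<longleftrightarrow>
    (\<exists>uk t. uk \<longlonglongrightarrow> u \<and> (\<forall>k. t k > 0) \<and> t \<longlonglongrightarrow> 0 \<and>
      (\<lambda>k. infdist (f xb) (M0 f (xb + t k *\<^sub>R uk k)) / (t k * norm (uk k)) powr g0) \<longlonglongrightarrow> 0 \<and>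
      (\<forall>\<^sub>F k in sequentially. F (xb + t k *\<^sub>R uk k) \<noteq> {}) \<and>
      (\<lambda>k. infdist yb (F (xb + t k *\<^sub>R uk k)) / (t k * norm (uk k)) powr g) \<longlonglongrightarrow> 0)"
  using critical_imp_infdist_quotients_tendsto_zero
    critical_if_infdist_quotients_tendsto_zero[OF assms]
  by blast

theorem proposition4p5:
  fixes f :: "'a::euclidean_space \<Rightarrow> real"
    and F :: "'a \<Rightarrow> 'b::euclidean_space set"
    and xb u :: 'a and yb :: 'b and g0 g :: real
  assumes "loc_lipschitz f"
    and "closed (gph F)"
    and "yb \<in> (\<Union>x. F x)"
    and "yb \<in> F xb"
    and "g0 \<ge> 1" and "g \<ge> 1"
    and "norm u = 1"
  shows "(critical f F xb yb g0 g u \<longleftrightarrow>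
           (\<exists>uk t. uk \<longlonglongrightarrow> u \<and> (\<forall>k. t k > 0) \<and> t \<longlonglongrightarrow> 0 \<and>
              (\<lambda>k. infdist (f xb) (M0 f (xb + t k *\<^sub>R uk k)) / (t k * norm (uk k)) powr g0)
                \<longlonglongrightarrow> 0 \<and>
              (\<forall>\<^sub>F k in sequentially. F (xb + t k *\<^sub>R uk k) \<noteq> {}) \<and>
              (\<lambda>k. infdist yb (F (xb + t k *\<^sub>R uk k)) / (t k * norm (uk k)) powr g)
                \<longlonglongrightarrow> 0))
       \<and> (g0 = g \<longrightarrow>
           (critical f F xb yb g0 g u \<longleftrightarrow> u \<in> pseudo_deriv_ker g (Mmap f F) xb (f xb, yb)))"
  using \<open>closed (gph F)\<close> \<open>norm u = 1\<close>
  by (intro conjI impI critical_iff_infdist_quotients_tendsto_zero)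
    (auto simp: critical_iff_pseudo_deriv_ker)

end
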